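(* Let $(s_0,s_1,\dots)$ and $(\delta_0,\delta_1,\dots)$ be non-negative real sequences with $s_{k+1}\le\delta_k s_k+c$ for all $k$, where $c\ge0$, and $\sum_{t=0}^\infty\delta_t\le L$. Then for all $t$, $s_t\le e^{L}\left(e^{-t}s_0+c\frac{e}{e-1}\right)$. *)

theory Defs
  imports Complex_Main
begin

end

theory Submission
  imports Defs
begin

text \<open>Since \<open>\<delta> \<le> exp (\<delta> - 1)\<close>, one step of the recurrence multiplies the bound
  \<open>exp (\<Sum>i<n. \<delta> i) * (exp (- n) * s 0 + c * q)\<close> by at most \<open>exp (\<delta> n) / e\<close>, and the added \<open>c\<close>
  is absorbed because \<open>q = e / (e - 1)\<close> is the fixed point of \<open>x \<mapsto> x / e + 1\<close>.\<close>

lemma le_exp_diff_one: "(x::real) \<le> exp (x - 1)"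
  using exp_ge_add_one_self[of "x - 1"] by simp

lemma exp_one_div_exp_one_minus_one_fixpoint:
  "exp 1 / (exp 1 - 1) / exp 1 + 1 = exp 1 / (exp 1 - 1 :: real)"
proof -
  have "exp 1 - 1 \<noteq> (0::real)" by simp
  then show ?thesis by (simp add: field_simps)
qed

lemma recurrence_le_exp_partial_sum:
  fixes s \<delta> :: "nat \<Rightarrow> real" and c :: real
  assumes s0: "s 0 \<ge> 0" and \<delta>: "\<And>k. \<delta> k \<ge> 0" and c: "c \<ge> 0"
    and rec: "\<And>k. s (Suc k) \<le> \<delta> k * s k + c"
  shows "s n \<le> exp (\<Sum>i<n. \<delta> i) * (exp (- real n) * s 0 + c * (exp 1 / (exp 1 - 1)))"
proof (induction n)
  case 0
  then show ?case using s0 c by simp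
next
  case (Suc n)
  define q :: real where "q = exp 1 / (exp 1 - 1)"
  define E where "E n = exp (\<Sum>i<n. \<delta> i)" for n
  have q: "q \<ge> 0" unfolding q_def by (simp add: less_imp_le)
  have q_fix: "q / exp 1 + 1 = q"
    unfolding q_def by (rule exp_one_div_exp_one_minus_one_fixpoint)
  have E_Suc: "E (Suc n) = exp (\<delta> n) * E n" by (simp add: E_def exp_add)
  have E_ge_1: "E (Suc n) \<ge> 1" unfolding E_def using \<delta> by (simp add: sum_nonneg)
  have B: "exp (- real n) * s 0 + c * q \<ge> 0" using s0 c q by simp
  have "s (Suc n) \<le> \<delta> n * s n + c" by (rule rec)
  also have "\<dots> \<le> \<delta> n * (E n * (exp (- real n) * s 0 + c * q)) + c"
    using Suc \<delta> by (intro add_right_mono mult_left_mono) (auto simp: E_def q_def)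
  also have "\<dots> \<le> exp (\<delta> n - 1) * (E n * (exp (- real n) * s 0 + c * q)) + c"
    using B le_exp_diff_one by (intro add_right_mono mult_right_mono) (auto simp: E_def)
  also have "\<dots> = E (Suc n) * (exp (- real (Suc n)) * s 0 + c * (q / exp 1)) + c"
    by (simp add: E_Suc exp_diff exp_minus field_simps)
  also have "\<dots> \<le> E (Suc n) * (exp (- real (Suc n)) * s 0 + c * (q / exp 1)) + E (Suc n) * c"
    using E_ge_1 c by (simp add: mult_le_cancel_right1)
  also have "\<dots> = E (Suc n) * (exp (- real (Suc n)) * s 0 + c * (q / exp 1 + 1))"
    by (simp add: algebra_simps)
  also have "\<dots> = E (Suc n) * (exp (- real (Suc n)) * s 0 + c * q)"
    by (simp only: q_fix)
  finally show ?case by (simp add: E_def q_def)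
qed

theorem lemma3:
  fixes s \<delta> :: "nat \<Rightarrow> real" and c L :: real
  assumes "\<And>k. s k \<ge> 0"
    and "\<And>k. \<delta> k \<ge> 0"
    and "c \<ge> 0"
    and "\<And>k. s (Suc k) \<le> \<delta> k * s k + c"
    and "summable \<delta>"
    and "(\<Sum>t. \<delta> t) \<le> L"
  shows "\<forall>t. s t \<le> exp L * (exp (- real t) * s 0 + c * (exp 1 / (exp 1 - 1)))"
proof
  fix t
  have "(\<Sum>i<t. \<delta> i) \<le> L"
    using sum_le_suminf[OF assms(5), of "{..<t}"] assms(2,6) by auto
  moreover have "exp (- real t) * s 0 + c * (exp 1 / (exp 1 - 1)) \<ge> 0"
    using assms(1,3) by (simp add: less_imp_le)
  ultimately have "exp (\<Sum>i<t. \<delta> i) * (exp (- real t) * s 0 + c * (exp 1 / (exp 1 - 1)))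
      \<le> exp L * (exp (- real t) * s 0 + c * (exp 1 / (exp 1 - 1)))"
    by (intro mult_right_mono) auto
  with recurrence_le_exp_partial_sum[OF assms(1)[of 0] assms(2-4)]
  show "s t \<le> exp L * (exp (- real t) * s 0 + c * (exp 1 / (exp 1 - 1)))"
    by (rule order_trans)
qed

end
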